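(* Assume $J$ satisfies (J). The following are equivalent: (i) $\int_0^\infty J(r)r^Ndr<\infty$; (ii) $\int_0^\infty J_*(l)\,l\,dl<\infty$; (iii) $\limsup_{R\to\infty}\int_0^R\int_R^\infty\tilde J(r,\rho)\,d\rho\,dr<\infty$; (iv) $\limsup_{R\to\infty}\int_0^R\int_R^\infty(r/R)^{N-1}\tilde J(r,\rho)\,d\rho\,dr<\infty$. Moreover, when these hold, $\int_0^\infty J_*(l)l\,dl=\lim_{R\to\infty}\int_0^R\int_R^\infty\tilde J(r,\rho)d\rho dr=\lim_{R\to\infty}\int_0^R\int_R^\infty(r/R)^{N-1}\tilde J(r,\rho)d\rho dr$.
   Context: $N\ge2$, $B_\rho=\{|x|<\rho\}\subset\mathbb R^N$. (J): $J\in C(\mathbb R_+)\cap L^\infty(\mathbb R_+)$, $J\ge0$, $J(0)>0$, $\int_{\mathbb R^N}J(|x|)dx=1$. $\tilde J(r,\rho)=\int_{\partial B_\rho}J(|x-y|)dS_y$ for $|x|=r$. $J_*(l)=\int_{\mathbb R^{N-1}}J(|(l,x')|)dx'$, $l\in\mathbb R$. *)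

theory Defs
  imports "HOL-Analysis.Analysis" "HOL-Probability.Probability"
begin

text \<open>R^k is rendered as the product measure space of functions on {..<k}
  (extensional functions, measure = k-fold product of Lebesgue measure).\<close>

definition Rn :: "nat \<Rightarrow> (nat \<Rightarrow> real) measure" where
  "Rn k = PiM {..<k} (\<lambda>_. lborel)"

definition enorm :: "nat \<Rightarrow> (nat \<Rightarrow> real) \<Rightarrow> real" where
  "enorm k x = sqrt (\<Sum>i<k. (x i)^2)"

text \<open>Surface integral over the sphere of radius rho in R^N, via the cone-measure
  formula: int_{|y|=rho} g dS = (N/rho) int_{|z|<rho} g(rho z/|z|) dz.\<close>

definition sphere_integral ::
  "nat \<Rightarrow> real \<Rightarrow> ((nat \<Rightarrow> real) \<Rightarrow> ennreal) \<Rightarrow> ennreal" where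
  "sphere_integral N \<rho> g =
     ennreal (real N / \<rho>) *
     (\<integral>\<^sup>+ z. g (\<lambda>i\<in>{..<N}. \<rho> * z i / enorm N z) * indicator {z. enorm N z < \<rho>} z \<partial>Rn N)"

definition pt :: "nat \<Rightarrow> real \<Rightarrow> (nat \<Rightarrow> real)" where
  "pt N r = (\<lambda>i\<in>{..<N}. if i = 0 then r else 0)"

definition Jtilde :: "nat \<Rightarrow> (real \<Rightarrow> real) \<Rightarrow> real \<Rightarrow> real \<Rightarrow> ennreal" where
  "Jtilde N J r \<rho> =
     sphere_integral N \<rho> (\<lambda>y. ennreal (J (enorm N (\<lambda>i. pt N r i - y i))))"

definition Jstar :: "nat \<Rightarrow> (real \<Rightarrow> real) \<Rightarrow> real \<Rightarrow> ennreal" where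
  "Jstar N J l = (\<integral>\<^sup>+ x'. ennreal (J (sqrt (l^2 + (enorm (N - 1) x')^2))) \<partial>Rn (N - 1))"

definition dbl :: "nat \<Rightarrow> (real \<Rightarrow> real) \<Rightarrow> (real \<Rightarrow> real \<Rightarrow> real) \<Rightarrow> real \<Rightarrow> ennreal" where
  "dbl N J w R =
     (\<integral>\<^sup>+ r. (\<integral>\<^sup>+ \<rho>. ennreal (w r R) * Jtilde N J r \<rho> * indicator {R..} \<rho> \<partial>lborel)
              * indicator {0..R} r \<partial>lborel)"

end

theory Submission
  imports Defs
begin

text \<open>Put \<open>x = (r, 0, \<dots>, 0)\<close> and \<open>z = x - y\<close>.  By polar coordinates and Fubini the double
  integral becomes \<open>\<integral> J(|z|) m\<^sub>R(z) dz\<close>, where \<open>m\<^sub>R(z)\<close> is the weighted length of the set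
  of \<open>r \<in> [0, R]\<close> with \<open>|x - z| \<ge> R\<close>.  Elementary geometry squeezes \<open>m\<^sub>R(z)\<close> between
  \<open>(1 - b/R)^(N-1) b\<close> and a quantity \<open>u\<^sub>R(z) \<le> |z|\<close> decreasing to \<open>b\<close>, where
  \<open>b = max 0 (- z\<^sub>1)\<close>.  Monotone convergence then shows that the double integrals
  tend to \<open>K = \<integral> J(|z|) max 0 (- z\<^sub>1) dz\<close> (from above this needs \<open>\<integral> J(|z|) |z| dz < \<infinity>\<close>),
  and that their limsup is finite only if \<open>K\<close> is.  Integrating out \<open>z'\<close> gives
  \<open>K = \<integral>\<^sub>0\<^sup>\<infinity> J\<^sub>*(l) l dl\<close>.  Finally \<open>K\<close> is finite iff \<open>\<integral> J(r) r\<^sup>N dr\<close> is: on one side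
  \<open>K \<le> \<integral> J(|z|) |z| dz = N |B\<^sub>1| \<integral> J(r) r\<^sup>N dr\<close>, on the other side \<open>max 0 (- z\<^sub>1) \<ge> |z|/2\<close>
  on the cone \<open>|z| \<le> -2 z\<^sub>1\<close>, which has positive measure.\<close>

section \<open>Polar coordinates\<close>

interpretation lborel_product: product_sigma_finite "\<lambda>_::nat. lborel::real measure"
  by standard

abbreviation lborel_Pi :: "nat set \<Rightarrow> (nat \<Rightarrow> real) measure" where
  "lborel_Pi I \<equiv> PiM I (\<lambda>_. lborel)"

text \<open>The measure \<^const>\<open>Rn\<close>, unfolded so that the measurability prover sees the product.\<close>

abbreviation RN :: "nat \<Rightarrow> (nat \<Rightarrow> real) measure" where
  "RN N \<equiv> lborel_Pi {..<N}"

lemma nn_integral_lborel_Pi_affine: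
  fixes c :: real
  assumes "finite I" "c \<noteq> 0" and f: "f \<in> borel_measurable (lborel_Pi I)"
  shows "(\<integral>\<^sup>+ x. f (\<lambda>i\<in>I. a i + c * x i) \<partial>lborel_Pi I)
     = ennreal ((1 / \<bar>c\<bar>) ^ card I) * (\<integral>\<^sup>+ x. f x \<partial>lborel_Pi I)"
  using assms(1) f
proof (induction I arbitrary: f rule: finite_induct)
  case empty
  then show ?case by (simp add: PiM_empty nn_integral_count_space_finite)
next
  case (insert i I)
  note [measurable] = insert.prems
  define G where "G u = (\<integral>\<^sup>+ y. f (u(i := y)) \<partial>lborel)" for u
  have Gm[measurable]: "G \<in> borel_measurable (lborel_Pi I)"
    unfolding G_def by measurable
  have "(\<integral>\<^sup>+ x. f (\<lambda>j\<in>insert i I. a j + c * x j) \<partial>lborel_Pi (insert i I))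
     = (\<integral>\<^sup>+ x. (\<integral>\<^sup>+ y. f ((\<lambda>j\<in>I. a j + c * x j)(i := a i + c * y)) \<partial>lborel) \<partial>lborel_Pi I)"
    using insert by (subst lborel_product.product_nn_integral_insert)
      (auto intro!: nn_integral_cong arg_cong[where f=f])
  also have "\<dots> = (\<integral>\<^sup>+ x. ennreal (1 / \<bar>c\<bar>) * G (\<lambda>j\<in>I. a j + c * x j) \<partial>lborel_Pi I)"
  proof (rule nn_integral_cong)
    fix x
    let ?u = "\<lambda>j\<in>I. a j + c * x j"
    have u: "?u \<in> space (lborel_Pi I)" by (simp add: space_PiM)
    have [measurable]: "(\<lambda>y. f (?u(i := y))) \<in> borel_measurable lborel"
      using measurable_comp[OF measurable_component_update[OF u \<open>i \<notin> I\<close>] insert.prems]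
      by (simp add: comp_def)
    show "(\<integral>\<^sup>+ y. f (?u(i := a i + c * y)) \<partial>lborel) = ennreal (1 / \<bar>c\<bar>) * G ?u"
      unfolding G_def
      using nn_integral_real_affine[OF _ \<open>c \<noteq> 0\<close>, of "\<lambda>y. f (?u(i := y))" "a i"] \<open>c \<noteq> 0\<close>
      by (simp add: ennreal_mult'[symmetric] divide_simps mult.assoc[symmetric] ennreal_mult[symmetric])
  qed
  also have "\<dots> = ennreal (1 / \<bar>c\<bar>) * (\<integral>\<^sup>+ x. G (\<lambda>j\<in>I. a j + c * x j) \<partial>lborel_Pi I)"
    by (rule nn_integral_cmult) measurable
  also have "\<dots> = ennreal (1 / \<bar>c\<bar>) * (ennreal ((1 / \<bar>c\<bar>) ^ card I) * (\<integral>\<^sup>+ x. G x \<partial>lborel_Pi I))"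
    by (simp only: insert.IH[OF Gm])
  also have "(\<integral>\<^sup>+ x. G x \<partial>lborel_Pi I) = (\<integral>\<^sup>+ x. f x \<partial>lborel_Pi (insert i I))"
    unfolding G_def using insert by (subst lborel_product.product_nn_integral_insert) auto
  finally show ?case
    using insert by (simp add: mult.assoc[symmetric] ennreal_mult[symmetric])
qed

lemma enorm_measurable[measurable]: "enorm N \<in> borel_measurable (RN N)"
  unfolding enorm_def[abs_def] by measurable

lemma enorm_nonneg: "enorm N x \<ge> 0"
  unfolding enorm_def by (simp add: sum_nonneg)

lemma enorm_cong: "(\<And>i. i < N \<Longrightarrow> x i = y i) \<Longrightarrow> enorm N x = enorm N y"
  unfolding enorm_def by (intro arg_cong[where f=sqrt] sum.cong) auto

lemma enorm_scale: "enorm N (\<lambda>i\<in>{..<N}. t * z i) = \<bar>t\<bar> * enorm N z"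
proof -
  have "(\<Sum>i<N. ((\<lambda>i\<in>{..<N}. t * z i) i)^2) = t^2 * (\<Sum>i<N. (z i)^2)"
    by (simp add: sum_distrib_left power_mult_distrib)
  then show ?thesis unfolding enorm_def by (simp add: real_sqrt_mult)
qed

lemma abs_le_enorm: "i < N \<Longrightarrow> \<bar>z i\<bar> \<le> enorm N z"
  using real_sqrt_le_mono[OF member_le_sum[of i "{..<N}" "\<lambda>j. (z j)^2"]]
  unfolding enorm_def by simp

lemma AE_enorm_nonzero:
  assumes N: "0 < N"
  shows "AE z in RN N. enorm N z \<noteq> 0"
proof (rule AE_I')
  let ?Z = "Pi\<^sub>E {..<N} (\<lambda>i. if i = 0 then {0} else UNIV :: real set)"
  have "emeasure (RN N) ?Z = (\<Prod>i<N. emeasure lborel (if i = 0 then {0::real} else UNIV))"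
    by (rule lborel_product.emeasure_PiM) auto
  also have "\<dots> = 0"
    using N by (intro prod_zero bexI[of _ 0]) auto
  finally show "?Z \<in> null_sets (RN N)"
    by (auto intro!: sets_PiM_I_finite simp: null_sets_def)
  show "{z \<in> space (RN N). \<not> enorm N z \<noteq> 0} \<subseteq> ?Z"
  proof (rule subsetI)
    fix z
    assume "z \<in> {z \<in> space (RN N). \<not> enorm N z \<noteq> 0}"
    then have z: "z \<in> space (RN N)" "enorm N z = 0" by auto
    show "z \<in> ?Z"
    proof (rule PiE_I)
      show "z i \<in> (if i = 0 then {0} else UNIV)" if "i \<in> {..<N}" for i
        using abs_le_enorm[OF N, of z] z(2) by simp
      show "z i = undefined" if "i \<notin> {..<N}" for i
        using z(1) that by (simp add: space_PiM PiE_iff extensional_def)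
    qed
  qed
qed

lemma nn_integral_power_kernel:
  assumes "0 < N"
  shows "(\<integral>\<^sup>+ l. ennreal (real N / l ^ (N + 1)) * indicator {1<..} l \<partial>lborel) = 1"
proof -
  have "(\<integral>\<^sup>+ l. ennreal (real N / l ^ (N + 1)) * indicator {1<..} l \<partial>lborel)
      = (\<integral>\<^sup>+ l. ennreal (real N / l ^ (N + 1)) * indicator {1..} l \<partial>lborel)"
    by (intro nn_integral_cong_AE, use AE_lborel_singleton[of 1] in eventually_elim)
       (auto split: split_indicator)
  also have "\<dots> = ennreal (0 - (- inverse (1 ^ N)))"
  proof (rule nn_integral_FTC_atLeast)
    fix x :: real
    assume x: "1 \<le> x"
    have "(N + 1) + (N - 1) = N + N" using assms by simp
    then have "x ^ (N + 1) * x ^ (N - 1) = (x ^ N)\<^sup>2"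
      by (simp only: power_add[symmetric] power2_eq_square)
    then have "real N * x ^ (N - 1) / (x ^ N)\<^sup>2 = real N / x ^ (N + 1)"
      using x by (simp add: field_simps)
    moreover have "DERIV (\<lambda>l. - inverse (l ^ N)) x :> real N * x ^ (N - 1) / (x ^ N)\<^sup>2"
      using x by (auto intro!: derivative_eq_intros simp: power2_eq_square divide_simps)
    ultimately show "DERIV (\<lambda>l. - inverse (l ^ N)) x :> real N / x ^ (N + 1)"
      by simp
    show "0 \<le> real N / x ^ (N + 1)" using x by simp
  next
    have "filterlim (\<lambda>l::real. l ^ N) at_top at_top"
      using assms by (intro filterlim_pow_at_top filterlim_ident) auto
    then show "((\<lambda>l::real. - inverse (l ^ N)) \<longlongrightarrow> 0) at_top"
      using tendsto_minus[OF tendsto_inverse_0_at_top] by fastforce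
  qed simp
  finally show ?thesis by simp
qed

lemma nn_integral_dilation_over_l:
  fixes g :: "real \<Rightarrow> ennreal"
  assumes g[measurable]: "g \<in> borel_measurable borel" and e: "e > 0"
  shows "(\<integral>\<^sup>+ l. ennreal (c / l) * indicator {1<..} l * g l \<partial>lborel)
       = (\<integral>\<^sup>+ m. ennreal (c / m) * indicator {e<..} m * g (m / e) \<partial>lborel)"
proof -
  have "(\<integral>\<^sup>+ l. ennreal (c / l) * indicator {1<..} l * g l \<partial>lborel)
      = ennreal (1 / e) * (\<integral>\<^sup>+ m. ennreal (c / (m / e)) * indicator {1<..} (m / e) * g (m / e) \<partial>lborel)"
    using nn_integral_real_affine[of "\<lambda>l. ennreal (c / l) * indicator {1<..} l * g l" "1 / e" 0] e
    by simp
  also have "\<dots> = (\<integral>\<^sup>+ m. ennreal (1 / e) * (ennreal (c / (m / e)) * indicator {1<..} (m / e) * g (m / e)) \<partial>lborel)"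
    by (rule nn_integral_cmult[symmetric]) measurable
  also have "\<dots> = (\<integral>\<^sup>+ m. ennreal (c / m) * indicator {e<..} m * g (m / e) \<partial>lborel)"
  proof (rule nn_integral_cong)
    fix m :: real
    have "ennreal (1 / e) * ennreal (c / (m / e)) = ennreal (c / m)"
      using e by (simp flip: ennreal_mult')
    moreover have "1 < m / e \<longleftrightarrow> e < m"
      using e by (simp add: field_simps)
    ultimately show "ennreal (1 / e) * (ennreal (c / (m / e)) * indicator {1<..} (m / e) * g (m / e))
        = ennreal (c / m) * indicator {e<..} m * g (m / e)"
      by (simp add: mult.assoc[symmetric] split: split_indicator)
  qed
  finally show ?thesis .
qed

lemma nn_integral_power_kernel_dilate:
  assumes f[measurable]: "f \<in> borel_measurable (RN N)"
  shows "ennreal (real N / l ^ (N + 1)) * indicator {1<..} l * (\<integral>\<^sup>+ y. f y \<partial>RN N)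
       = (\<integral>\<^sup>+ y. ennreal (real N / l) * indicator {1<..} l * f (\<lambda>i\<in>{..<N}. l * y i) \<partial>RN N)"
proof (cases "1 < l")
  case True
  have "(\<integral>\<^sup>+ y. ennreal (real N / l) * indicator {1<..} l * f (\<lambda>i\<in>{..<N}. l * y i) \<partial>RN N)
      = ennreal (real N / l) * (\<integral>\<^sup>+ y. f (\<lambda>i\<in>{..<N}. 0 + l * y i) \<partial>RN N)"
    using True by (subst nn_integral_cmult[symmetric]) (auto, measurable)
  also have "\<dots> = ennreal (real N / l) * ennreal ((1 / l) ^ N) * (\<integral>\<^sup>+ y. f y \<partial>RN N)"
    using nn_integral_lborel_Pi_affine[OF _ _ f, of l "\<lambda>_. 0"] True
    by (simp add: mult.assoc)
  also have "ennreal (real N / l) * ennreal ((1 / l) ^ N) = ennreal (real N / l ^ (N + 1))"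
    using True by (simp flip: ennreal_mult add: power_divide field_simps)
  finally show ?thesis
    using True by (simp only: indicator_simps greaterThan_iff if_True mult_1_right)
qed simp

text \<open>Averaging \<open>\<integral> f\<close> against the probability kernel
  \<open>N / l^(N+1)\<close> on \<open>]1, \<infinity>[\<close>, rescaling by \<open>l\<close> and exchanging the integrals
  leads to the cone-measure formula of \<^const>\<open>sphere_integral\<close>.\<close>

lemma nn_integral_polar:
  assumes N: "0 < N" and f[measurable]: "f \<in> borel_measurable (RN N)"
  shows "(\<integral>\<^sup>+ y. f y \<partial>RN N) = (\<integral>\<^sup>+ \<rho>. sphere_integral N \<rho> f \<partial>lborel)"
proof -
  interpret P: pair_sigma_finite lborel "RN N"
    by (intro pair_sigma_finite.intro lborel.sigma_finite_measure_axioms lborel_product.sigma_finite)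
      simp
  have "(\<integral>\<^sup>+ y. f y \<partial>RN N)
      = (\<integral>\<^sup>+ l. ennreal (real N / l ^ (N + 1)) * indicator {1<..} l \<partial>lborel) * (\<integral>\<^sup>+ y. f y \<partial>RN N)"
    unfolding nn_integral_power_kernel[OF N] by simp
  also have "\<dots> = (\<integral>\<^sup>+ l. ennreal (real N / l ^ (N + 1)) * indicator {1<..} l * (\<integral>\<^sup>+ y. f y \<partial>RN N) \<partial>lborel)"
    by (rule nn_integral_multc[symmetric]) measurable
  also have "\<dots> = (\<integral>\<^sup>+ l. (\<integral>\<^sup>+ y. ennreal (real N / l) * indicator {1<..} l *
        f (\<lambda>i\<in>{..<N}. l * y i) \<partial>RN N) \<partial>lborel)"
    by (intro nn_integral_cong nn_integral_power_kernel_dilate[OF f])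
  also have "\<dots> = (\<integral>\<^sup>+ y. (\<integral>\<^sup>+ l. ennreal (real N / l) * indicator {1<..} l *
        f (\<lambda>i\<in>{..<N}. l * y i) \<partial>lborel) \<partial>RN N)"
    by (rule P.Fubini'[symmetric]) measurable
  also have "\<dots> = (\<integral>\<^sup>+ y. (\<integral>\<^sup>+ m. ennreal (real N / m) * indicator {enorm N y<..} m *
        f (\<lambda>i\<in>{..<N}. m * y i / enorm N y) \<partial>lborel) \<partial>RN N)"
  proof (rule nn_integral_cong_AE, use AE_enorm_nonzero[OF N] in eventually_elim)
    fix y
    assume "enorm N y \<noteq> 0"
    then have e: "enorm N y > 0" using enorm_nonneg[of N y] by linarith
    have "(\<lambda>i\<in>{..<N}. m / enorm N y * y i) = (\<lambda>i\<in>{..<N}. m * y i / enorm N y)" for m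
      by auto
    then show "(\<integral>\<^sup>+ l. ennreal (real N / l) * indicator {1<..} l * f (\<lambda>i\<in>{..<N}. l * y i) \<partial>lborel)
        = (\<integral>\<^sup>+ m. ennreal (real N / m) * indicator {enorm N y<..} m *
            f (\<lambda>i\<in>{..<N}. m * y i / enorm N y) \<partial>lborel)"
      using nn_integral_dilation_over_l[OF _ e, of "\<lambda>l. f (\<lambda>i\<in>{..<N}. l * y i)" "real N"]
      by simp
  qed
  also have "\<dots> = (\<integral>\<^sup>+ m. (\<integral>\<^sup>+ y. ennreal (real N / m) * indicator {enorm N y<..} m *
        f (\<lambda>i\<in>{..<N}. m * y i / enorm N y) \<partial>RN N) \<partial>lborel)"
  proof (rule P.Fubini')
    have [measurable]: "(\<lambda>x. \<lambda>i\<in>{..<N}. fst x * snd x i / enorm N (snd x))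
        \<in> measurable (lborel \<Otimes>\<^sub>M RN N) (RN N)"
      by (rule measurable_restrict) measurable
    have [measurable]: "Measurable.pred (lborel \<Otimes>\<^sub>M RN N) (\<lambda>x. fst x \<in> {enorm N (snd x)<..})"
      by (simp only: greaterThan_iff) measurable
    show "(\<lambda>(m, y). ennreal (real N / m) * indicator {enorm N y<..} m * f (\<lambda>i\<in>{..<N}. m * y i / enorm N y))
       \<in> borel_measurable (lborel \<Otimes>\<^sub>M RN N)" by measurable
  qed
  also have "\<dots> = (\<integral>\<^sup>+ m. sphere_integral N m f \<partial>lborel)"
    unfolding sphere_integral_def Rn_def
    by (subst nn_integral_cmult[symmetric]; measurable?)
      (auto intro!: nn_integral_cong simp: mult.assoc split: split_indicator)
  finally show ?thesis .
qed

lemma sphere_integral_nonpos: "\<rho> \<le> 0 \<Longrightarrow> sphere_integral N \<rho> g = 0"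
  unfolding sphere_integral_def by (simp add: ennreal_neg divide_nonneg_nonpos)

lemma sphere_integral_radial_factor:
  assumes N: "0 < N" and \<rho>: "\<rho> > 0" and g[measurable]: "g \<in> borel_measurable (RN N)"
  shows "sphere_integral N \<rho> (\<lambda>y. h (enorm N y) * g y) = h \<rho> * sphere_integral N \<rho> g"
proof -
  let ?P = "\<lambda>z. \<lambda>i\<in>{..<N}. \<rho> * z i / enorm N z"
  have [measurable]: "?P \<in> measurable (RN N) (RN N)"
  proof (rule measurable_restrict)
    fix i
    assume "i \<in> {..<N}"
    then have [measurable]: "(\<lambda>x. x i) \<in> borel_measurable (RN N)"
      by (auto intro: measurable_component_singleton)
    show "(\<lambda>x. \<rho> * x i / enorm N x) \<in> measurable (RN N) lborel" by measurable
  qed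
  have "(\<integral>\<^sup>+ z. h (enorm N (?P z)) * g (?P z) * indicator {z. enorm N z < \<rho>} z \<partial>RN N)
      = (\<integral>\<^sup>+ z. h \<rho> * (g (?P z) * indicator {z. enorm N z < \<rho>} z) \<partial>RN N)"
  proof (rule nn_integral_cong_AE, use AE_enorm_nonzero[OF N] in eventually_elim)
    fix z
    assume "enorm N z \<noteq> 0"
    then have e: "enorm N z > 0" using enorm_nonneg[of N z] by linarith
    have P: "?P z = (\<lambda>i\<in>{..<N}. (\<rho> / enorm N z) * z i)" by auto
    have "enorm N (?P z) = \<rho>"
      unfolding P enorm_scale using e \<rho> by simp
    then show "h (enorm N (?P z)) * g (?P z) * indicator {z. enorm N z < \<rho>} z
        = h \<rho> * (g (?P z) * indicator {z. enorm N z < \<rho>} z)"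
      by (simp add: mult.assoc)
  qed
  also have "\<dots> = h \<rho> * (\<integral>\<^sup>+ z. g (?P z) * indicator {z. enorm N z < \<rho>} z \<partial>RN N)"
    by (rule nn_integral_cmult) measurable
  finally show ?thesis
    unfolding sphere_integral_def Rn_def by (simp add: ac_simps)
qed

definition scale_invariant :: "nat \<Rightarrow> (nat \<Rightarrow> real) set \<Rightarrow> bool" where
  "scale_invariant N C \<longleftrightarrow> (\<forall>t>0. \<forall>z\<in>space (RN N). (\<lambda>i\<in>{..<N}. t * z i) \<in> C \<longleftrightarrow> z \<in> C)"

lemma sets_Int_enorm_less:
  assumes "C \<in> sets (RN N)"
  shows "C \<inter> {z. enorm N z < \<mu>} \<in> sets (RN N)"
proof -
  have "C \<inter> {z. enorm N z < \<mu>} = C \<inter> {z \<in> space (RN N). enorm N z < \<mu>}"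
    using sets.sets_into_space[OF assms] by auto
  then show ?thesis using assms by simp
qed

lemma emeasure_cone_Int_ball:
  assumes C: "C \<in> sets (RN N)" "scale_invariant N C" and \<mu>: "\<mu> > 0"
  shows "emeasure (RN N) (C \<inter> {z. enorm N z < \<mu>})
       = ennreal (\<mu> ^ N) * emeasure (RN N) (C \<inter> {z. enorm N z < 1})"
proof -
  let ?B1 = "C \<inter> {z. enorm N z < 1}"
  have "emeasure (RN N) (C \<inter> {z. enorm N z < \<mu>})
      = (\<integral>\<^sup>+ z. indicator ?B1 (\<lambda>i\<in>{..<N}. 0 + (1 / \<mu>) * z i) \<partial>RN N)"
  proof (subst nn_integral_indicator[symmetric])
    show "C \<inter> {z. enorm N z < \<mu>} \<in> sets (RN N)" by (rule sets_Int_enorm_less[OF C(1)])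
    show "(\<integral>\<^sup>+ z. indicator (C \<inter> {z. enorm N z < \<mu>}) z \<partial>RN N)
        = (\<integral>\<^sup>+ z. indicator ?B1 (\<lambda>i\<in>{..<N}. 0 + (1 / \<mu>) * z i) \<partial>RN N)"
    proof (rule nn_integral_cong)
      fix z
      assume "z \<in> space (RN N)"
      then have "(\<lambda>i\<in>{..<N}. (1 / \<mu>) * z i) \<in> C \<longleftrightarrow> z \<in> C"
        using C(2) \<mu> unfolding scale_invariant_def by (meson divide_pos_pos zero_less_one)
      moreover have "enorm N (\<lambda>i\<in>{..<N}. (1 / \<mu>) * z i) = enorm N z / \<mu>"
        using enorm_scale[of N "1 / \<mu>" z] \<mu> by simp
      then have "enorm N (\<lambda>i\<in>{..<N}. (1 / \<mu>) * z i) < 1 \<longleftrightarrow> enorm N z < \<mu>"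
        using \<mu> by (simp only: divide_less_eq_1_pos)
      ultimately show "indicator (C \<inter> {z. enorm N z < \<mu>}) z
          = (indicator ?B1 (\<lambda>i\<in>{..<N}. 0 + (1 / \<mu>) * z i) :: ennreal)"
        by (simp split: split_indicator)
    qed
  qed
  also have "\<dots> = ennreal (\<mu> ^ N) * emeasure (RN N) ?B1"
    using nn_integral_lborel_Pi_affine[of "{..<N}" "1 / \<mu>" "indicator ?B1" "\<lambda>_. 0"]
      sets_Int_enorm_less[OF C(1)] \<mu>
    by simp
  finally show ?thesis .
qed

lemma sphere_integral_indicator_cone:
  assumes N: "0 < N" and C: "C \<in> sets (RN N)" "scale_invariant N C" and \<mu>: "\<mu> > 0"
  shows "sphere_integral N \<mu> (indicator C)
       = ennreal (real N * \<mu> ^ (N - 1)) * emeasure (RN N) (C \<inter> {z. enorm N z < 1})"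
proof -
  let ?P = "\<lambda>z. \<lambda>i\<in>{..<N}. \<mu> * z i / enorm N z"
  let ?E = "emeasure (RN N) (C \<inter> {z. enorm N z < 1})"
  have "(\<integral>\<^sup>+ z. indicator C (?P z) * indicator {z. enorm N z < \<mu>} z \<partial>RN N)
      = (\<integral>\<^sup>+ z. indicator (C \<inter> {z. enorm N z < \<mu>}) z \<partial>RN N)"
  proof (rule nn_integral_cong_AE)
    show "AE z in RN N. indicator C (?P z) * indicator {z. enorm N z < \<mu>} z
        = (indicator (C \<inter> {z. enorm N z < \<mu>}) z :: ennreal)"
      using AE_enorm_nonzero[OF N] AE_space
    proof eventually_elim
      case (elim z)
      then have "enorm N z > 0" using enorm_nonneg[of N z] by linarith
      moreover have "?P z = (\<lambda>i\<in>{..<N}. (\<mu> / enorm N z) * z i)" by auto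
      ultimately have "?P z \<in> C \<longleftrightarrow> z \<in> C"
        using C(2) \<mu> elim unfolding scale_invariant_def by (metis divide_pos_pos)
      then show ?case by (simp split: split_indicator)
    qed
  qed
  also have "\<dots> = ennreal (\<mu> ^ N) * ?E"
    using sets_Int_enorm_less[OF C(1)] emeasure_cone_Int_ball[OF C \<mu>] by simp
  finally have "sphere_integral N \<mu> (indicator C) = (ennreal (real N / \<mu>) * ennreal (\<mu> ^ N)) * ?E"
    unfolding sphere_integral_def Rn_def by (simp add: mult.assoc)
  moreover have "real N / \<mu> * \<mu> ^ N = real N * \<mu> ^ (N - 1)"
    using N \<mu> by (cases N) auto
  ultimately show ?thesis
    using \<mu> by (simp flip: ennreal_mult)
qed

lemma nn_integral_radial_cone:
  assumes N: "0 < N" and C: "C \<in> sets (RN N)" "scale_invariant N C"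
    and \<phi>[measurable]: "\<phi> \<in> borel_measurable borel"
  shows "(\<integral>\<^sup>+ z. \<phi> (enorm N z) * indicator C z \<partial>RN N)
    = ennreal (real N) * emeasure (RN N) (C \<inter> {z. enorm N z < 1}) *
      (\<integral>\<^sup>+ r. \<phi> r * ennreal (r ^ (N - 1)) * indicator {0<..} r \<partial>lborel)"
proof -
  note C(1)[measurable]
  have "(\<integral>\<^sup>+ z. \<phi> (enorm N z) * indicator C z \<partial>RN N)
      = (\<integral>\<^sup>+ \<mu>. sphere_integral N \<mu> (\<lambda>z. \<phi> (enorm N z) * indicator C z) \<partial>lborel)"
    by (rule nn_integral_polar[OF N]) measurable
  also have "\<dots> = (\<integral>\<^sup>+ \<mu>. ennreal (real N) * emeasure (RN N) (C \<inter> {z. enorm N z < 1}) *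
      (\<phi> \<mu> * ennreal (\<mu> ^ (N - 1)) * indicator {0<..} \<mu>) \<partial>lborel)"
  proof (rule nn_integral_cong)
    fix \<mu> :: real
    show "sphere_integral N \<mu> (\<lambda>z. \<phi> (enorm N z) * indicator C z)
        = ennreal (real N) * emeasure (RN N) (C \<inter> {z. enorm N z < 1}) *
          (\<phi> \<mu> * ennreal (\<mu> ^ (N - 1)) * indicator {0<..} \<mu>)"
    proof (cases "\<mu> > 0")
      case True
      have "sphere_integral N \<mu> (\<lambda>z. \<phi> (enorm N z) * indicator C z)
          = \<phi> \<mu> * (ennreal (real N * \<mu> ^ (N - 1)) * emeasure (RN N) (C \<inter> {z. enorm N z < 1}))"
        by (simp only: sphere_integral_radial_factor[OF N True] sphere_integral_indicator_cone[OF N C True]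
            borel_measurable_indicator C(1))
      then show ?thesis using True by (simp add: ennreal_mult ac_simps)
    qed (simp add: sphere_integral_nonpos)
  qed
  also have "\<dots> = ennreal (real N) * emeasure (RN N) (C \<inter> {z. enorm N z < 1}) *
      (\<integral>\<^sup>+ r. \<phi> r * ennreal (r ^ (N - 1)) * indicator {0<..} r \<partial>lborel)"
    by (rule nn_integral_cmult) measurable
  finally show ?thesis .
qed

section \<open>The half-space moment\<close>

lemma distr_lborel_Pi_reindex:
  assumes I: "finite I" and f: "bij_betw f I K"
  shows "distr (lborel_Pi K) (lborel_Pi I) (\<lambda>x. \<lambda>i\<in>I. x (f i)) = lborel_Pi I"
proof (rule lborel_product.PiM_eqI[OF I])
  have meas: "(\<lambda>x. \<lambda>i\<in>I. x (f i)) \<in> measurable (lborel_Pi K) (lborel_Pi I)"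
    using f by (intro measurable_restrict measurable_component_singleton) (auto simp: bij_betw_def)
  show "sets (distr (lborel_Pi K) (lborel_Pi I) (\<lambda>x. \<lambda>i\<in>I. x (f i))) = sets (lborel_Pi I)"
    by simp
  fix A :: "nat \<Rightarrow> real set"
  assume A: "\<And>i. i \<in> I \<Longrightarrow> A i \<in> sets lborel"
  define g where "g = the_inv_into I f"
  have g: "bij_betw g K I"
    unfolding g_def by (rule bij_betw_the_inv_into[OF f])
  have fg: "f (g j) = j" if "j \<in> K" for j
    unfolding g_def using f that by (rule f_the_inv_into_f_bij_betw)
  have gf: "g (f i) = i" if "i \<in> I" for i
    unfolding g_def using f that by (auto simp: bij_betw_def the_inv_into_f_f)
  have fI: "f i \<in> K" if "i \<in> I" for i
    using f that by (auto simp: bij_betw_def)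
  have gK: "g j \<in> I" if "j \<in> K" for j
    using g that by (auto simp: bij_betw_def)
  have "(\<lambda>x. \<lambda>i\<in>I. x (f i)) -` Pi\<^sub>E I A \<inter> space (lborel_Pi K) = Pi\<^sub>E K (\<lambda>j. A (g j))"
    using fg gf fI gK by (auto simp: space_PiM PiE_iff extensional_def) metis+
  then have "emeasure (distr (lborel_Pi K) (lborel_Pi I) (\<lambda>x. \<lambda>i\<in>I. x (f i))) (Pi\<^sub>E I A)
      = emeasure (lborel_Pi K) (Pi\<^sub>E K (\<lambda>j. A (g j)))"
    using A by (subst emeasure_distr[OF meas]) (auto intro!: sets_PiM_I_finite I)
  also have "\<dots> = (\<Prod>j\<in>K. emeasure lborel (A (g j)))"
    using A gK bij_betw_finite[OF f] I by (intro lborel_product.emeasure_PiM) auto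
  also have "\<dots> = (\<Prod>i\<in>I. emeasure lborel (A i))"
    by (rule prod.reindex_bij_betw[OF g])
  finally show "emeasure (distr (lborel_Pi K) (lborel_Pi I) (\<lambda>x. \<lambda>i\<in>I. x (f i))) (Pi\<^sub>E I A)
      = (\<Prod>i\<in>I. emeasure lborel (A i))" .
qed

definition tail_sumsq :: "nat \<Rightarrow> (nat \<Rightarrow> real) \<Rightarrow> real" where
  "tail_sumsq N z = (\<Sum>i\<in>{Suc 0..<N}. (z i)^2)"

lemma tail_sumsq_nonneg: "tail_sumsq N z \<ge> 0"
  unfolding tail_sumsq_def by (simp add: sum_nonneg)

lemma tail_sumsq_measurable[measurable]: "tail_sumsq N \<in> borel_measurable (RN N)"
proof -
  have "(\<lambda>z. z i) \<in> borel_measurable (RN N)" if "i \<in> {Suc 0..<N}" for i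
    using that by (auto intro: measurable_component_singleton)
  then show ?thesis
    unfolding tail_sumsq_def[abs_def] by (intro borel_measurable_sum borel_measurable_power)
qed

lemma enorm_eq_sqrt_head_tail: "0 < N \<Longrightarrow> enorm N z = sqrt ((z 0)^2 + tail_sumsq N z)"
  unfolding enorm_def tail_sumsq_def by (simp add: lessThan_atLeast0 sum.atLeast_Suc_lessThan)

text \<open>\<^term>\<open>J\<close> is only continuous on \<open>[0, \<infinity>[\<close>; extending it by \<^term>\<open>J 0\<close> to the
  left makes it Borel measurable, and \<^term>\<open>Jext J\<close> agrees with \<^term>\<open>J\<close> at every norm.\<close>

definition Jext :: "(real \<Rightarrow> real) \<Rightarrow> real \<Rightarrow> real" where
  "Jext J t = J (max 0 t)"

lemma Jext_measurable:
  assumes "continuous_on {0..} J"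
  shows "Jext J \<in> borel_measurable borel"
proof -
  have "continuous_on UNIV (\<lambda>t. J (max 0 t))"
    by (rule continuous_on_compose2[OF assms]) (auto intro!: continuous_intros)
  then show ?thesis unfolding Jext_def[abs_def] by (rule borel_measurable_continuous_onI)
qed

lemma Jext_nonneg_arg: "t \<ge> 0 \<Longrightarrow> Jext J t = J t"
  unfolding Jext_def by simp

lemma Jext_enorm: "Jext J (enorm N x) = J (enorm N x)"
  by (simp add: Jext_nonneg_arg enorm_nonneg)

lemma Jstar_measurable:
  assumes [measurable]: "Jext J \<in> borel_measurable borel"
  shows "Jstar N J \<in> borel_measurable borel"
proof -
  have "Jstar N J = (\<lambda>l. \<integral>\<^sup>+ x. ennreal (Jext J (sqrt (l^2 + (enorm (N - 1) x)^2))) \<partial>RN (N - 1))"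
    unfolding Jstar_def Rn_def Jext_def by simp
  moreover note [measurable (raw)] =
    sigma_finite_measure.borel_measurable_nn_integral[OF lborel_product.sigma_finite[of "{..<N - 1}"]]
  ultimately show ?thesis by (simp only:) measurable
qed

lemma nn_integral_fibre_eq_Jstar:
  assumes N: "N = Suc n" and [measurable]: "Jext J \<in> borel_measurable borel"
  shows "(\<integral>\<^sup>+ x. ennreal (J (enorm N (x(0 := y)))) \<partial>lborel_Pi {Suc 0..<N}) = Jstar N J y"
proof -
  define g where "g S = ennreal (Jext J (sqrt (y^2 + S)))" for S
  have [measurable]: "g \<in> borel_measurable borel" unfolding g_def by measurable
  have shift: "bij_betw (\<lambda>i. i - 1) {Suc 0..<N} {..<n}"
    using N by (intro bij_betwI[where g=Suc]) auto
  have "(\<integral>\<^sup>+ x. ennreal (J (enorm N (x(0 := y)))) \<partial>lborel_Pi {Suc 0..<N})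
      = (\<integral>\<^sup>+ x. g (\<Sum>i\<in>{Suc 0..<N}. (x i)^2) \<partial>lborel_Pi {Suc 0..<N})"
  proof (rule nn_integral_cong)
    fix x :: "nat \<Rightarrow> real"
    have "tail_sumsq N (x(0 := y)) = (\<Sum>i\<in>{Suc 0..<N}. (x i)^2)"
      unfolding tail_sumsq_def by (intro sum.cong) auto
    then have "enorm N (x(0 := y)) = sqrt (y^2 + (\<Sum>i\<in>{Suc 0..<N}. (x i)^2))"
      using enorm_eq_sqrt_head_tail[of N "x(0 := y)"] N by simp
    moreover have "0 \<le> y^2 + (\<Sum>i\<in>{Suc 0..<N}. (x i)^2)"
      by (intro add_nonneg_nonneg zero_le_power2 sum_nonneg)
    ultimately show "ennreal (J (enorm N (x(0 := y)))) = g (\<Sum>i\<in>{Suc 0..<N}. (x i)^2)"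
      unfolding g_def by (simp add: Jext_nonneg_arg)
  qed
  also have "\<dots> = (\<integral>\<^sup>+ x. g (\<Sum>i\<in>{Suc 0..<N}. (x i)^2)
      \<partial>distr (lborel_Pi {..<n}) (lborel_Pi {Suc 0..<N}) (\<lambda>x. \<lambda>i\<in>{Suc 0..<N}. x (i - 1)))"
    by (simp only: distr_lborel_Pi_reindex[OF _ shift] finite_atLeastLessThan)
  also have "\<dots> = (\<integral>\<^sup>+ x. g (\<Sum>i\<in>{Suc 0..<N}. ((\<lambda>i\<in>{Suc 0..<N}. x (i - 1)) i)^2) \<partial>lborel_Pi {..<n})"
  proof (rule nn_integral_distr)
    show "(\<lambda>x. \<lambda>i\<in>{Suc 0..<N}. x (i - 1)) \<in> measurable (lborel_Pi {..<n}) (lborel_Pi {Suc 0..<N})"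
      using N by (intro measurable_restrict measurable_component_singleton) auto
  qed measurable
  also have "\<dots> = (\<integral>\<^sup>+ x. g (\<Sum>i\<in>{Suc 0..<N}. (x (i - 1))^2) \<partial>lborel_Pi {..<n})"
    by (intro nn_integral_cong arg_cong[where f=g] sum.cong) auto
  also have "\<dots> = Jstar N J y"
  proof -
    have "(\<Sum>i\<in>{Suc 0..<N}. (x (i - 1))^2) = (enorm n x)^2" for x :: "nat \<Rightarrow> real"
    proof -
      have "(\<Sum>i\<in>{Suc 0..<N}. (x (i - 1))^2) = (\<Sum>j<n. (x j)^2)"
        unfolding N by (simp only: sum.shift_bounds_Suc_ivl lessThan_atLeast0 diff_Suc_1)
      then show ?thesis unfolding enorm_def by (simp add: sum_nonneg)
    qed
    then show ?thesis unfolding Jstar_def Rn_def g_def N by (simp add: Jext_nonneg_arg)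
  qed
  finally show ?thesis .
qed

definition half_space_moment :: "nat \<Rightarrow> (real \<Rightarrow> real) \<Rightarrow> ennreal" where
  "half_space_moment N J = (\<integral>\<^sup>+ z. ennreal (J (enorm N z)) * ennreal (max 0 (- z 0)) \<partial>RN N)"

lemma half_space_moment_integrand_measurable:
  assumes "0 < N" and [measurable]: "Jext J \<in> borel_measurable borel"
  shows "(\<lambda>z. ennreal (J (enorm N z)) * ennreal (max 0 (- z 0))) \<in> borel_measurable (RN N)"
proof -
  have [measurable]: "(\<lambda>x. x 0) \<in> borel_measurable (RN N)"
    using assms by (auto intro: measurable_component_singleton)
  have "(\<lambda>z. ennreal (Jext J (enorm N z)) * ennreal (max 0 (- z 0))) \<in> borel_measurable (RN N)"
    by measurable
  then show ?thesis by (simp only: Jext_enorm)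
qed

lemma Jstar_moment_eq_half_space_moment:
  assumes N: "0 < N" and Jm[measurable]: "Jext J \<in> borel_measurable borel"
  shows "(\<integral>\<^sup>+ l. Jstar N J l * ennreal l * indicator {0..} l \<partial>lborel) = half_space_moment N J"
proof -
  obtain n where n: "N = Suc n" using N by (cases N) auto
  have [measurable]: "Jstar N J \<in> borel_measurable borel" by (rule Jstar_measurable[OF Jm])
  have ins: "{..<N} = insert 0 {Suc 0..<N}" using n by auto
  have "half_space_moment N J
      = (\<integral>\<^sup>+ y. (\<integral>\<^sup>+ x. ennreal (J (enorm N (x(0 := y)))) * ennreal (max 0 (- y)) \<partial>lborel_Pi {Suc 0..<N}) \<partial>lborel)"
    unfolding half_space_moment_def ins
    using half_space_moment_integrand_measurable[OF N Jm]
    by (subst lborel_product.product_nn_integral_insert_rev) (auto simp: ins)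
  also have "\<dots> = (\<integral>\<^sup>+ y. Jstar N J y * ennreal (max 0 (- y)) \<partial>lborel)"
  proof (rule nn_integral_cong)
    fix y :: real
    have [measurable]: "(\<lambda>x. x(0 := y)) \<in> measurable (lborel_Pi {Suc 0..<N}) (RN N)"
      using ins by (intro measurable_fun_upd[where J="{Suc 0..<N}"]) auto
    have "(\<lambda>x. ennreal (Jext J (enorm N (x(0 := y))))) \<in> borel_measurable (lborel_Pi {Suc 0..<N})"
      by measurable
    then have "(\<lambda>x. ennreal (J (enorm N (x(0 := y))))) \<in> borel_measurable (lborel_Pi {Suc 0..<N})"
      by (simp only: Jext_enorm)
    then show "(\<integral>\<^sup>+ x. ennreal (J (enorm N (x(0 := y)))) * ennreal (max 0 (- y)) \<partial>lborel_Pi {Suc 0..<N})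
        = Jstar N J y * ennreal (max 0 (- y))"
      by (simp add: nn_integral_multc nn_integral_fibre_eq_Jstar[OF n Jm])
  qed
  also have "\<dots> = (\<integral>\<^sup>+ l. Jstar N J (- l) * ennreal (max 0 l) \<partial>lborel)"
    using nn_integral_real_affine[of "\<lambda>y. Jstar N J y * ennreal (max 0 (- y))" "-1" 0] by simp
  also have "\<dots> = (\<integral>\<^sup>+ l. Jstar N J l * ennreal l * indicator {0..} l \<partial>lborel)"
    by (auto intro!: nn_integral_cong simp: Jstar_def max_def split: split_indicator)
  finally show ?thesis ..
qed

definition radial_moment :: "nat \<Rightarrow> (real \<Rightarrow> real) \<Rightarrow> ennreal" where
  "radial_moment N J = (\<integral>\<^sup>+ r. ennreal (J r * r ^ N) * indicator {0..} r \<partial>lborel)"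

definition norm_moment :: "nat \<Rightarrow> (real \<Rightarrow> real) \<Rightarrow> ennreal" where
  "norm_moment N J = (\<integral>\<^sup>+ z. ennreal (J (enorm N z)) * ennreal (enorm N z) \<partial>RN N)"

definition neg_cone :: "nat \<Rightarrow> (nat \<Rightarrow> real) set" where
  "neg_cone N = {z \<in> space (RN N). enorm N z \<le> 2 * (- z 0)}"

lemma radial_moment_eq_polar:
  assumes N: "0 < N" and Jnn: "\<forall>r\<ge>0. J r \<ge> 0"
  shows "(\<integral>\<^sup>+ r. ennreal (Jext J r * r) * ennreal (r ^ (N - 1)) * indicator {0<..} r \<partial>lborel)
       = radial_moment N J"
  unfolding radial_moment_def
proof (rule nn_integral_cong)
  fix r :: real
  show "ennreal (Jext J r * r) * ennreal (r ^ (N - 1)) * indicator {0<..} r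
      = ennreal (J r * r ^ N) * indicator {0..} r"
  proof (cases "r > 0")
    case True
    have "Jext J r * r * r ^ (N - 1) = J r * r ^ N"
      using True N by (simp add: Jext_nonneg_arg power_eq_if)
    then show ?thesis using True Jnn by (simp flip: ennreal_mult add: Jext_nonneg_arg)
  next
    case False
    then show ?thesis using N by (cases "r = 0") (auto simp: zero_power)
  qed
qed

lemma emeasure_unit_ball_finite: "emeasure (RN N) (space (RN N) \<inter> {z. enorm N z < 1}) < \<infinity>"
proof -
  have "space (RN N) \<inter> {z. enorm N z < 1} \<subseteq> Pi\<^sub>E {..<N} (\<lambda>_. {-1..1})"
  proof (intro subsetI PiE_I)
    fix z i
    assume z: "z \<in> space (RN N) \<inter> {z. enorm N z < 1}"
    show "z i \<in> {-1..1}" if "i \<in> {..<N}"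
      using abs_le_enorm[of i N z] that z by auto
    show "z i = undefined" if "i \<notin> {..<N}"
      using z that by (auto simp: space_PiM PiE_iff extensional_def)
  qed
  then have "emeasure (RN N) (space (RN N) \<inter> {z. enorm N z < 1})
      \<le> emeasure (RN N) (Pi\<^sub>E {..<N} (\<lambda>_. {-1..1}))"
    by (intro emeasure_mono) (auto intro!: sets_PiM_I_finite)
  also have "\<dots> < \<infinity>"
    by (simp add: lborel_product.emeasure_PiM power_less_top_ennreal)
  finally show ?thesis .
qed

lemma neg_cone_sets: "0 < N \<Longrightarrow> neg_cone N \<in> sets (RN N)"
  unfolding neg_cone_def by (measurable; auto intro: measurable_component_singleton)

lemma scale_invariant_neg_cone:
  assumes N: "0 < N"
  shows "scale_invariant N (neg_cone N)"
  unfolding scale_invariant_def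
proof (intro allI impI ballI)
  fix t :: real and z
  assume t: "t > 0" and z: "z \<in> space (RN N)"
  have "(\<lambda>i\<in>{..<N}. t * z i) \<in> space (RN N)" by (simp add: space_PiM)
  moreover have "enorm N (\<lambda>i\<in>{..<N}. t * z i) = t * enorm N z" using t by (simp add: enorm_scale)
  moreover have "t * enorm N z \<le> 2 * (- (t * z 0)) \<longleftrightarrow> enorm N z \<le> 2 * (- z 0)"
    using mult_le_cancel_left_pos[OF t, of "enorm N z" "2 * (- z 0)"] by (simp add: algebra_simps)
  ultimately show "(\<lambda>i\<in>{..<N}. t * z i) \<in> neg_cone N \<longleftrightarrow> z \<in> neg_cone N"
    unfolding neg_cone_def using N z by auto
qed

lemma box_subset_neg_cone_ball:
  assumes N: "0 < N"
  defines "e \<equiv> 1 / (4 * real N)"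
  shows "Pi\<^sub>E {..<N} (\<lambda>i. if i = 0 then {-3/5<..<-2/5} else {-e<..<e})
       \<subseteq> neg_cone N \<inter> {z. enorm N z < 1}"
proof
  fix z
  assume z: "z \<in> Pi\<^sub>E {..<N} (\<lambda>i. if i = 0 then {-3/5<..<-2/5} else {-e<..<e})"
  have all: "\<forall>i\<in>{..<N}. z i \<in> (if i = 0 then {-3/5<..<-2/5} else {-e<..<e})"
    using z unfolding PiE_iff by blast
  then have "z 0 \<in> {-3/5<..<-2/5}" using N by (metis lessThan_iff)
  then have z0: "-3/5 < z 0" "z 0 < -2/5" by auto
  have "(z i)^2 \<le> e^2" if "i \<in> {Suc 0..<N}" for i
  proof -
    have "z i \<in> {-e<..<e}" using bspec[OF all, of i] that by auto
    then have "\<bar>z i\<bar> \<le> \<bar>e\<bar>" by auto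
    then show ?thesis by (simp add: abs_le_square_iff)
  qed
  then have "tail_sumsq N z \<le> real (N - 1) * e^2"
    unfolding tail_sumsq_def using sum_mono[of "{Suc 0..<N}" "\<lambda>i. (z i)^2" "\<lambda>_. e^2"] by simp
  also have "\<dots> \<le> real N * e^2" by (intro mult_right_mono) auto
  also have "\<dots> \<le> 1 / 16" using N by (simp add: e_def power2_eq_square field_simps)
  finally have tail: "tail_sumsq N z \<le> 1 / 16" .
  have "\<bar>z 0\<bar>^2 < (3/5)^2" using z0 by (intro power_strict_mono) auto
  then have "(z 0)^2 + tail_sumsq N z < (4/5)^2"
    using tail by (simp add: power2_eq_square)
  then have "sqrt ((z 0)^2 + tail_sumsq N z) < sqrt ((4/5)^2)"
    by (rule real_sqrt_less_mono)
  then have "enorm N z < 4/5"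
    unfolding enorm_eq_sqrt_head_tail[OF N] by simp
  moreover have "z \<in> space (RN N)" using z by (auto simp: space_PiM PiE_iff)
  ultimately show "z \<in> neg_cone N \<inter> {z. enorm N z < 1}"
    using z0 unfolding neg_cone_def by auto
qed

lemma emeasure_neg_cone_ball_pos:
  assumes N: "0 < N"
  shows "0 < emeasure (RN N) (neg_cone N \<inter> {z. enorm N z < 1})"
proof -
  define e :: real where "e = 1 / (4 * real N)"
  have "emeasure (RN N) (Pi\<^sub>E {..<N} (\<lambda>i. if i = 0 then {-3/5<..<-2/5} else {-e<..<e}))
      = (\<Prod>i<N. emeasure lborel (if i = 0 then {-3/5<..<-2/5::real} else {-e<..<e}))"
    by (rule lborel_product.emeasure_PiM) auto
  also have "\<dots> \<noteq> 0"
    using N by (auto simp: e_def prod_zero_iff)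
  finally have "0 < emeasure (RN N) (Pi\<^sub>E {..<N} (\<lambda>i. if i = 0 then {-3/5<..<-2/5} else {-e<..<e}))"
    by (simp add: zero_less_iff_neq_zero)
  also have "\<dots> \<le> emeasure (RN N) (neg_cone N \<inter> {z. enorm N z < 1})"
    using box_subset_neg_cone_ball[OF N] sets_Int_enorm_less[OF neg_cone_sets[OF N]]
    unfolding e_def by (rule emeasure_mono)
  finally show ?thesis .
qed

lemma norm_moment_eq:
  assumes N: "0 < N" and [measurable]: "Jext J \<in> borel_measurable borel" and Jnn: "\<forall>r\<ge>0. J r \<ge> 0"
  shows "norm_moment N J
       = ennreal (real N) * emeasure (RN N) (space (RN N) \<inter> {z. enorm N z < 1}) * radial_moment N J"
proof -
  have "norm_moment N J
      = (\<integral>\<^sup>+ z. ennreal (Jext J (enorm N z) * enorm N z) * indicator (space (RN N)) z \<partial>RN N)"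
    unfolding norm_moment_def
    by (intro nn_integral_cong) (simp add: Jext_nonneg_arg enorm_nonneg ennreal_mult Jnn)
  also have "\<dots> = ennreal (real N) * emeasure (RN N) (space (RN N) \<inter> {z. enorm N z < 1}) *
      (\<integral>\<^sup>+ r. ennreal (Jext J r * r) * ennreal (r ^ (N - 1)) * indicator {0<..} r \<partial>lborel)"
    by (rule nn_integral_radial_cone[OF N]) (auto simp: scale_invariant_def space_PiM)
  finally show ?thesis using radial_moment_eq_polar[OF N Jnn] by simp
qed

lemma half_space_moment_le_norm_moment:
  assumes "0 < N" shows "half_space_moment N J \<le> norm_moment N J"
  unfolding half_space_moment_def norm_moment_def
proof (intro nn_integral_mono mult_left_mono ennreal_leI)
  fix z
  show "max 0 (- z 0) \<le> enorm N z"
    using abs_le_enorm[OF assms, of z] enorm_nonneg[of N z] by linarith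
qed simp

lemma radial_moment_le_half_space_moment:
  assumes N: "0 < N" and Jm[measurable]: "Jext J \<in> borel_measurable borel" and Jnn: "\<forall>r\<ge>0. J r \<ge> 0"
  shows "ennreal (real N) * emeasure (RN N) (neg_cone N \<inter> {z. enorm N z < 1}) * radial_moment N J
       \<le> 2 * half_space_moment N J"
proof -
  note neg_cone_sets[OF N, measurable]
  have "ennreal (real N) * emeasure (RN N) (neg_cone N \<inter> {z. enorm N z < 1}) * radial_moment N J
      = (\<integral>\<^sup>+ z. ennreal (Jext J (enorm N z) * enorm N z) * indicator (neg_cone N) z \<partial>RN N)"
    unfolding radial_moment_eq_polar[OF N Jnn, symmetric]
    by (rule nn_integral_radial_cone[OF N neg_cone_sets[OF N] scale_invariant_neg_cone[OF N], symmetric])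
      measurable
  also have "\<dots> \<le> (\<integral>\<^sup>+ z. 2 * (ennreal (J (enorm N z)) * ennreal (max 0 (- z 0))) \<partial>RN N)"
  proof (rule nn_integral_mono)
    fix z
    show "ennreal (Jext J (enorm N z) * enorm N z) * indicator (neg_cone N) z
        \<le> 2 * (ennreal (J (enorm N z)) * ennreal (max 0 (- z 0)))"
    proof (cases "z \<in> neg_cone N")
      case True
      then have "enorm N z \<le> 2 * max 0 (- z 0)" unfolding neg_cone_def by auto
      moreover have J: "J (enorm N z) \<ge> 0" using Jnn enorm_nonneg[of N z] by auto
      ultimately have "J (enorm N z) * enorm N z \<le> 2 * (J (enorm N z) * max 0 (- z 0))"
        by (metis mult.left_commute mult_left_mono)
      then have "ennreal (J (enorm N z) * enorm N z) \<le> ennreal (2 * (J (enorm N z) * max 0 (- z 0)))"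
        by (rule ennreal_leI)
      then show ?thesis using True J by (simp add: Jext_enorm ennreal_mult)
    qed simp
  qed
  also have "\<dots> = 2 * half_space_moment N J"
    unfolding half_space_moment_def by (rule nn_integral_cmult) (rule half_space_moment_integrand_measurable[OF N Jm])
  finally show ?thesis .
qed

lemma norm_moment_finite:
  assumes N: "0 < N" and Jm: "Jext J \<in> borel_measurable borel" and Jnn: "\<forall>r\<ge>0. J r \<ge> 0"
    and "radial_moment N J < \<infinity>"
  shows "norm_moment N J < \<infinity>"
  using assms emeasure_unit_ball_finite[of N] by (simp add: norm_moment_eq ennreal_mult_less_top)

lemma half_space_moment_finite_iff:
  assumes N: "0 < N" and Jm: "Jext J \<in> borel_measurable borel" and Jnn: "\<forall>r\<ge>0. J r \<ge> 0"
  shows "half_space_moment N J < \<infinity> \<longleftrightarrow> radial_moment N J < \<infinity>"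
proof
  let ?c = "ennreal (real N) * emeasure (RN N) (neg_cone N \<inter> {z. enorm N z < 1})"
  assume "half_space_moment N J < \<infinity>"
  then have "2 * half_space_moment N J < \<infinity>" by (simp add: ennreal_mult_less_top)
  with radial_moment_le_half_space_moment[OF N Jm Jnn] have "?c * radial_moment N J < \<infinity>"
    by (rule le_less_trans)
  moreover have "?c \<noteq> 0"
    using emeasure_neg_cone_ball_pos[OF N] N by simp
  ultimately show "radial_moment N J < \<infinity>"
    using ennreal_mult_less_top[of ?c "radial_moment N J"] by auto
next
  assume "radial_moment N J < \<infinity>"
  then have "norm_moment N J < \<infinity>"
    by (rule norm_moment_finite[OF N Jm Jnn])
  then show "half_space_moment N J < \<infinity>"
    using half_space_moment_le_norm_moment[OF N, of J] by (rule le_less_trans[rotated])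
qed

section \<open>Integrals outside a ball\<close>

lemma enorm_pt_minus:
  assumes "0 < N"
  shows "enorm N (\<lambda>i. pt N r i - z i) = sqrt ((r - z 0)^2 + tail_sumsq N z)"
proof -
  have "tail_sumsq N (\<lambda>i. pt N r i - z i) = tail_sumsq N z"
    unfolding tail_sumsq_def pt_def by (intro sum.cong) auto
  then show ?thesis
    using assms by (simp add: enorm_eq_sqrt_head_tail pt_def)
qed

text \<open>Integrating \<^const>\<open>Jtilde\<close> over the spheres of radius at least \<open>R\<close> integrates
  \<open>J(|x - y|)\<close> over \<open>|y| \<ge> R\<close>; substituting \<open>z = x - y\<close> with \<open>x = (r, 0, \<dots>, 0)\<close> gives:\<close>

lemma nn_integral_Jtilde_outside_ball:
  assumes N: "0 < N" and [measurable]: "Jext J \<in> borel_measurable borel" and R: "R > 0"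
  shows "(\<integral>\<^sup>+ \<rho>. ennreal c * Jtilde N J r \<rho> * indicator {R..} \<rho> \<partial>lborel)
    = (\<integral>\<^sup>+ z. ennreal c * ennreal (J (enorm N z)) *
          indicator {z. R \<le> sqrt ((r - z 0)^2 + tail_sumsq N z)} z \<partial>RN N)"
proof -
  have [measurable]: "(\<lambda>x. x 0) \<in> borel_measurable (RN N)"
    using N by (auto intro: measurable_component_singleton)
  define G where "G y = ennreal (J (enorm N (\<lambda>i. pt N r i - y i)))" for y
  have G_eq: "G y = ennreal (Jext J (sqrt ((r - y 0)^2 + tail_sumsq N y)))" for y
    unfolding G_def enorm_pt_minus[OF N] by (simp add: Jext_nonneg_arg tail_sumsq_nonneg)
  have [measurable]: "G \<in> borel_measurable (RN N)"
    unfolding G_eq[abs_def] by measurable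
  define F where "F y = ennreal c * indicator {R..} (enorm N y) * G y" for y
  have [measurable]: "F \<in> borel_measurable (RN N)"
    unfolding F_def by measurable
  have "(\<integral>\<^sup>+ \<rho>. ennreal c * Jtilde N J r \<rho> * indicator {R..} \<rho> \<partial>lborel)
      = (\<integral>\<^sup>+ \<rho>. sphere_integral N \<rho> F \<partial>lborel)"
  proof (rule nn_integral_cong)
    fix \<rho> :: real
    show "ennreal c * Jtilde N J r \<rho> * indicator {R..} \<rho> = sphere_integral N \<rho> F"
    proof (cases "\<rho> > 0")
      case True
      have "Jtilde N J r \<rho> = sphere_integral N \<rho> G"
        unfolding Jtilde_def G_def ..
      moreover have "sphere_integral N \<rho> F = ennreal c * indicator {R..} \<rho> * sphere_integral N \<rho> G"
        using sphere_integral_radial_factor[OF N True \<open>G \<in> _\<close>, of "\<lambda>t. ennreal c * indicator {R..} t"]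
        unfolding F_def .
      ultimately show ?thesis by (simp add: ac_simps)
    next
      case False
      then show ?thesis using R sphere_integral_nonpos[of \<rho> N F] by simp
    qed
  qed
  also have "\<dots> = (\<integral>\<^sup>+ y. F y \<partial>RN N)"
    by (rule nn_integral_polar[OF N, symmetric]) measurable
  also have "\<dots> = (\<integral>\<^sup>+ z. F (\<lambda>i\<in>{..<N}. pt N r i + -1 * z i) \<partial>RN N)"
    using nn_integral_lborel_Pi_affine[of "{..<N}" "-1" F "pt N r"] by simp
  also have "\<dots> = (\<integral>\<^sup>+ z. ennreal c * ennreal (J (enorm N z)) *
          indicator {z. R \<le> sqrt ((r - z 0)^2 + tail_sumsq N z)} z \<partial>RN N)"
  proof (rule nn_integral_cong)
    fix z
    have y: "enorm N (\<lambda>i. pt N r i - (\<lambda>i\<in>{..<N}. pt N r i + -1 * z i) i) = enorm N z"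
      by (rule enorm_cong) simp
    have "enorm N (\<lambda>i\<in>{..<N}. pt N r i + -1 * z i) = enorm N (\<lambda>i. pt N r i - z i)"
      by (rule enorm_cong) simp
    then have x_minus_z: "enorm N (\<lambda>i\<in>{..<N}. pt N r i + -1 * z i) = sqrt ((r - z 0)^2 + tail_sumsq N z)"
      unfolding enorm_pt_minus[OF N] .
    from y x_minus_z show "F (\<lambda>i\<in>{..<N}. pt N r i + -1 * z i) = ennreal c * ennreal (J (enorm N z)) *
          indicator {z. R \<le> sqrt ((r - z 0)^2 + tail_sumsq N z)} z"
      unfolding F_def G_def by (simp add: ac_simps split: split_indicator)
  qed
  finally show ?thesis .
qed

text \<open>For \<open>x = (r, 0, \<dots>, 0)\<close> and \<open>z = x - y\<close> with \<open>z = (a, z')\<close>, \<open>|z'|\<^sup>2 = s\<close>, this is the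
  (weighted) length of the set of radii \<open>r \<in> [0, R]\<close> for which \<open>y\<close> lies outside \<open>B\<^sub>R\<close>.\<close>

definition exit_weight :: "(real \<Rightarrow> real \<Rightarrow> real) \<Rightarrow> real \<Rightarrow> real \<Rightarrow> real \<Rightarrow> ennreal" where
  "exit_weight w R a s = (\<integral>\<^sup>+ r. ennreal (w r R) * indicator {0..R} r *
      indicator {r. R \<le> sqrt ((r - a)^2 + s)} r \<partial>lborel)"

lemma exit_weight_integrand_measurable:
  assumes [measurable]: "(\<lambda>r. w r R) \<in> borel_measurable borel"
  shows "(\<lambda>r. ennreal (w r R) * indicator {0..R} r * indicator {r. R \<le> sqrt ((r - a)^2 + s)} r)
    \<in> borel_measurable lborel"
proof -
  have "{r. R \<le> sqrt ((r - a)^2 + s)} \<in> sets borel" by measurable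
  then show ?thesis by measurable
qed

lemma dbl_eq_nn_integral_exit_weight:
  assumes N: "0 < N" and Jm[measurable]: "Jext J \<in> borel_measurable borel" and R: "R > 0"
    and [measurable]: "(\<lambda>r. w r R) \<in> borel_measurable borel"
  shows "dbl N J w R = (\<integral>\<^sup>+ z. ennreal (J (enorm N z)) * exit_weight w R (z 0) (tail_sumsq N z) \<partial>RN N)"
proof -
  have [measurable]: "(\<lambda>x. x 0) \<in> borel_measurable (RN N)"
    using N by (auto intro: measurable_component_singleton)
  interpret P: pair_sigma_finite lborel "RN N"
    by (intro pair_sigma_finite.intro lborel.sigma_finite_measure_axioms lborel_product.sigma_finite)
      simp
  define H where "H r z = ennreal (w r R) * indicator {0..R} r *
      indicator {r. R \<le> sqrt ((r - z 0)^2 + tail_sumsq N z)} r * ennreal (Jext J (enorm N z))" for r z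
  have [measurable]: "Measurable.pred (lborel \<Otimes>\<^sub>M RN N)
      (\<lambda>x. fst x \<in> {r. R \<le> sqrt ((r - snd x 0)^2 + tail_sumsq N (snd x))})"
    by simp measurable
  have "dbl N J w R = (\<integral>\<^sup>+ r. (\<integral>\<^sup>+ z. H r z \<partial>RN N) \<partial>lborel)"
    unfolding dbl_def nn_integral_Jtilde_outside_ball[OF N Jm R]
  proof (intro nn_integral_cong)
    fix r :: real
    have [measurable]: "(\<lambda>z. ennreal (w r R) * ennreal (Jext J (enorm N z)) *
        indicator {z. R \<le> sqrt ((r - z 0)^2 + tail_sumsq N z)} z) \<in> borel_measurable (RN N)"
      by measurable
    show "(\<integral>\<^sup>+ z. ennreal (w r R) * ennreal (J (enorm N z)) *
          indicator {z. R \<le> sqrt ((r - z 0)^2 + tail_sumsq N z)} z \<partial>RN N) * indicator {0..R} r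
        = (\<integral>\<^sup>+ z. H r z \<partial>RN N)"
      unfolding H_def Jext_enorm[of J N, symmetric]
      by (subst nn_integral_multc[symmetric]; measurable?)
        (auto intro!: nn_integral_cong simp: ac_simps split: split_indicator)
  qed
  also have "\<dots> = (\<integral>\<^sup>+ z. (\<integral>\<^sup>+ r. H r z \<partial>lborel) \<partial>RN N)"
    by (rule P.Fubini'[symmetric]) (unfold H_def, measurable)
  also have "\<dots> = (\<integral>\<^sup>+ z. ennreal (J (enorm N z)) * exit_weight w R (z 0) (tail_sumsq N z) \<partial>RN N)"
  proof (rule nn_integral_cong)
    fix z
    have "(\<integral>\<^sup>+ r. H r z \<partial>lborel) = exit_weight w R (z 0) (tail_sumsq N z) * ennreal (Jext J (enorm N z))"
      unfolding H_def exit_weight_def by (rule nn_integral_multc[OF exit_weight_integrand_measurable]) fact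
    then show "(\<integral>\<^sup>+ r. H r z \<partial>lborel) = ennreal (J (enorm N z)) * exit_weight w R (z 0) (tail_sumsq N z)"
      by (simp add: Jext_enorm mult.commute)
  qed
  finally show ?thesis .
qed

lemma sqrt_shift_le_add:
  fixes r a s :: real
  assumes "0 \<le> r" "0 \<le> s"
  shows "sqrt ((r - a)^2 + s) \<le> r + sqrt (a^2 + s)"
proof (rule real_le_lsqrt)
  have "\<bar>a\<bar> \<le> sqrt (a^2 + s)"
    using assms real_sqrt_le_mono[of "a^2" "a^2 + s"] by simp
  then have "- a * r \<le> r * sqrt (a^2 + s)"
    using assms by (metis abs_ge_minus_self mult.commute mult_right_mono order_trans)
  then show "(r - a)^2 + s \<le> (r + sqrt (a^2 + s))^2"
    using assms by (simp add: power2_eq_square algebra_simps)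
qed (use assms in auto)

lemma radius_lower_bound_outside_ball:
  fixes r a s R :: real
  assumes r: "0 \<le> r" and s: "0 \<le> s" and R: "R > 0" and inside: "sqrt (a^2 + s) < R"
    and outside: "R \<le> sqrt ((r - a)^2 + s)"
  shows "R + a - s / R \<le> r"
proof -
  have "R^2 \<le> (sqrt ((r - a)^2 + s))^2" using outside R by (intro power_mono) auto
  then have out2: "R^2 \<le> (r - a)^2 + s" using s by simp
  have "(sqrt (a^2 + s))^2 < R^2" using inside s by (intro power_strict_mono) auto
  then have in2: "a^2 + s < R^2" using s by simp
  have ra: "r - a \<ge> 0"
  proof (rule ccontr)
    assume "\<not> r - a \<ge> 0"
    then have "(a - r)^2 \<le> a^2" using r by (intro power_mono) auto
    then show False using out2 in2 by (simp add: power2_commute)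
  qed
  show ?thesis
  proof (rule ccontr)
    assume "\<not> R + a - s / R \<le> r"
    then have "(r - a)^2 < (R - s / R)^2" using ra by (intro power_strict_mono) auto
    moreover have "(s / R)^2 \<le> s"
    proof -
      have "s \<le> R^2" using in2 zero_le_power2[of a] by linarith
      then have "s * s \<le> s * R^2" using s by (intro mult_left_mono)
      then show ?thesis using R by (simp add: power2_eq_square field_simps)
    qed
    then have "(R - s / R)^2 \<le> R^2 - s"
      using R by (simp add: power2_eq_square field_simps)
    ultimately show False using out2 by linarith
  qed
qed

definition exit_lower :: "nat \<Rightarrow> real \<Rightarrow> real \<Rightarrow> real" where
  "exit_lower N R b = (max 0 (1 - b / R))^(N - 1) * b"

definition exit_upper :: "real \<Rightarrow> real \<Rightarrow> real \<Rightarrow> real" where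
  "exit_upper R a s =
     (if sqrt (a^2 + s) < R then min (sqrt (a^2 + s)) (max 0 (- a + s / R)) else sqrt (a^2 + s))"

lemma exit_lower_nonneg: "b \<ge> 0 \<Longrightarrow> exit_lower N R b \<ge> 0"
  unfolding exit_lower_def by simp

lemma exit_upper_nonneg: "s \<ge> 0 \<Longrightarrow> exit_upper R a s \<ge> 0"
  unfolding exit_upper_def by auto

lemma exit_upper_le: "s \<ge> 0 \<Longrightarrow> exit_upper R a s \<le> sqrt (a^2 + s)"
  unfolding exit_upper_def by auto

lemma exit_weight_ge_exit_lower:
  assumes N: "2 \<le> N" and R: "R > 0" and s: "s \<ge> 0"
    and w: "\<And>r. 0 \<le> r \<Longrightarrow> r \<le> R \<Longrightarrow> (r / R)^(N - 1) \<le> w r R"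
  shows "ennreal (exit_lower N R (max 0 (- a))) \<le> exit_weight w R a s"
proof (cases "0 < - a \<and> - a < R")
  case False
  then have "exit_lower N R (max 0 (- a)) = 0"
    using N R by (auto simp: exit_lower_def max_def field_simps)
  then show ?thesis by simp
next
  case True
  define c where "c = (1 + a / R)^(N - 1)"
  have "ennreal (exit_lower N R (max 0 (- a))) = ennreal c * emeasure lborel {R + a..R}"
    unfolding exit_lower_def c_def using True R
    by (simp flip: ennreal_mult add: max_def field_simps)
  also have "\<dots> = (\<integral>\<^sup>+ r. ennreal c * indicator {R + a..R} r \<partial>lborel)"
    by (simp add: nn_integral_cmult_indicator)
  also have "\<dots> \<le> exit_weight w R a s"
    unfolding exit_weight_def
  proof (intro nn_integral_mono)
    fix r :: real
    show "ennreal c * indicator {R + a..R} r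
        \<le> ennreal (w r R) * indicator {0..R} r * indicator {r. R \<le> sqrt ((r - a)^2 + s)} r"
    proof (cases "r \<in> {R + a..R}")
      case r: True
      have "(R + a) / R \<le> r / R" using r R by (intro divide_right_mono) auto
      then have "1 + a / R \<le> r / R" using R by (simp add: add_divide_distrib)
      moreover have "0 \<le> 1 + a / R" using True R by (simp add: field_simps)
      ultimately have "c \<le> (r / R)^(N - 1)"
        unfolding c_def by (rule power_mono)
      also have "\<dots> \<le> w r R" using w r True by simp
      finally have cw: "c \<le> w r R" .
      have "R^2 \<le> (r - a)^2" using r R by (intro power_mono) auto
      then have "R \<le> sqrt ((r - a)^2 + s)"
        using s by (intro real_le_rsqrt) auto
      with cw show ?thesis using r True by (auto simp: ennreal_leI)
    qed simp
  qed
  finally show ?thesis .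
qed

lemma exit_weight_le_exit_upper:
  assumes R: "R > 0" and s: "s \<ge> 0"
    and w: "\<And>r. 0 \<le> r \<Longrightarrow> r \<le> R \<Longrightarrow> w r R \<le> 1"
  shows "exit_weight w R a s \<le> ennreal (exit_upper R a s)"
proof -
  let ?u = "exit_upper R a s"
  have left: "R - ?u \<le> r" if r: "0 \<le> r" "r \<le> R" and d: "R \<le> sqrt ((r - a)^2 + s)" for r
  proof -
    have "R \<le> r + sqrt (a^2 + s)" using sqrt_shift_le_add[OF r(1) s, of a] d by linarith
    moreover have "sqrt (a^2 + s) < R \<Longrightarrow> R + a - s / R \<le> r"
      using radius_lower_bound_outside_ball[OF r(1) s R _ d] by simp
    ultimately show ?thesis
      unfolding exit_upper_def by (auto simp: min_def max_def)
  qed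
  have "exit_weight w R a s \<le> (\<integral>\<^sup>+ r. indicator {R - ?u..R} r \<partial>lborel)"
    unfolding exit_weight_def
    using left w by (intro nn_integral_mono) (auto simp: ennreal_le_1 split: split_indicator)
  also have "\<dots> = ennreal ?u" using exit_upper_nonneg[OF s] by simp
  finally show ?thesis .
qed

lemma exit_lower_mono:
  assumes "0 < R" "R \<le> R'" "b \<ge> 0"
  shows "exit_lower N R b \<le> exit_lower N R' b"
  unfolding exit_lower_def
proof (rule mult_right_mono[OF power_mono])
  have "b / R' \<le> b / R" using assms by (intro divide_left_mono) auto
  then show "max 0 (1 - b / R) \<le> max 0 (1 - b / R')" by auto
qed (use assms in auto)

lemma exit_upper_antimono:
  assumes "0 < R" "R \<le> R'" "s \<ge> 0"
  shows "exit_upper R' a s \<le> exit_upper R a s"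
proof -
  have "s / R' \<le> s / R" using assms by (intro divide_left_mono) auto
  then show ?thesis
    using assms exit_upper_le[OF assms(3), of R a] unfolding exit_upper_def by (auto simp: min_def)
qed

lemma exit_lower_tendsto: "(\<lambda>n. exit_lower N (real (Suc n)) b) \<longlonglongrightarrow> b"
proof -
  have "(\<lambda>n. b / real (Suc n)) \<longlonglongrightarrow> 0"
    by (rule LIMSEQ_Suc[OF lim_const_over_n])
  then have "(\<lambda>n. (max 0 (1 - b / real (Suc n)))^(N - 1) * b) \<longlonglongrightarrow> (max 0 (1 - 0))^(N - 1) * b"
    by (intro tendsto_intros)
  then show ?thesis unfolding exit_lower_def by simp
qed

lemma exit_upper_tendsto:
  assumes s: "s \<ge> 0"
  shows "(\<lambda>n. exit_upper (real (Suc n)) a s) \<longlonglongrightarrow> max 0 (- a)"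
proof -
  let ?n = "sqrt (a^2 + s)"
  have "(\<lambda>k. s / real (Suc k)) \<longlonglongrightarrow> 0"
    by (rule LIMSEQ_Suc[OF lim_const_over_n])
  then have "(\<lambda>k. min ?n (max 0 (- a + s / real (Suc k)))) \<longlonglongrightarrow> min ?n (max 0 (- a + 0))"
    by (intro tendsto_intros)
  moreover have "min ?n (max 0 (- a + 0)) = max 0 (- a)"
    using s real_sqrt_le_mono[of "a^2" "a^2 + s"] by auto
  ultimately have lim: "(\<lambda>k. min ?n (max 0 (- a + s / real (Suc k)))) \<longlonglongrightarrow> max 0 (- a)"
    by simp
  obtain k0 :: nat where "?n < k0" using reals_Archimedean2 by blast
  then have "eventually (\<lambda>k. min ?n (max 0 (- a + s / real (Suc k))) = exit_upper (real (Suc k)) a s) sequentially"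
    unfolding exit_upper_def eventually_sequentially by (intro exI[of _ k0]) auto
  then show ?thesis by (rule Lim_transform_eventually[OF lim])
qed

section \<open>Limits of the double integrals\<close>

lemma tendsto_at_top_of_mono_sequence:
  fixes f :: "real \<Rightarrow> 'a::linorder_topology"
  assumes mono: "\<And>x y. 0 < x \<Longrightarrow> x \<le> y \<Longrightarrow> f x \<le> f y"
    and lim: "(\<lambda>n. f (real (Suc n))) \<longlonglongrightarrow> K"
  shows "(f \<longlongrightarrow> K) at_top"
proof (rule order_tendstoI)
  fix a
  assume "a < K"
  then obtain n0 where n0: "a < f (real (Suc n0))"
    using order_tendstoD(1)[OF lim] by (auto simp: eventually_sequentially)
  show "eventually (\<lambda>x. a < f x) at_top"
    unfolding eventually_at_top_linorder
    using n0 mono by (intro exI[of _ "real (Suc n0)"]) (auto intro: order.strict_trans2)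
next
  fix a
  assume "K < a"
  have inc: "incseq (\<lambda>n. f (real (Suc n)))"
    by (rule incseq_SucI) (rule mono, auto)
  have "f x \<le> K" if "x \<ge> 1" for x
  proof -
    obtain m :: nat where "x < real m" using reals_Archimedean2 by blast
    then have "f x \<le> f (real (Suc m))" using mono that by auto
    also have "\<dots> \<le> K" by (rule incseq_le[OF inc lim])
    finally show ?thesis .
  qed
  then show "eventually (\<lambda>x. f x < a) at_top"
    unfolding eventually_at_top_linorder using \<open>K < a\<close> by (auto intro: le_less_trans)
qed

lemma tendsto_at_top_of_antimono_sequence:
  fixes f :: "real \<Rightarrow> 'a::linorder_topology"
  assumes mono: "\<And>x y. 0 < x \<Longrightarrow> x \<le> y \<Longrightarrow> f y \<le> f x"
    and lim: "(\<lambda>n. f (real (Suc n))) \<longlonglongrightarrow> K"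
  shows "(f \<longlongrightarrow> K) at_top"
proof (rule order_tendstoI)
  fix a
  assume "a < K"
  have dec: "decseq (\<lambda>n. f (real (Suc n)))"
    by (rule decseq_SucI) (rule mono, auto)
  have "K \<le> f x" if "x \<ge> 1" for x
  proof -
    obtain m :: nat where "x < real m" using reals_Archimedean2 by blast
    have "K \<le> f (real (Suc m))" by (rule decseq_ge[OF dec lim])
    also have "\<dots> \<le> f x" using mono that \<open>x < real m\<close> by auto
    finally show ?thesis .
  qed
  then show "eventually (\<lambda>x. a < f x) at_top"
    unfolding eventually_at_top_linorder using \<open>a < K\<close> by (auto intro: less_le_trans)
next
  fix a
  assume "K < a"
  then obtain n0 where n0: "f (real (Suc n0)) < a"
    using order_tendstoD(2)[OF lim] by (auto simp: eventually_sequentially)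
  show "eventually (\<lambda>x. f x < a) at_top"
    unfolding eventually_at_top_linorder
  proof (intro exI[of _ "real (Suc n0)"] allI impI)
    fix x
    assume "real (Suc n0) \<le> x"
    then have "f x \<le> f (real (Suc n0))" by (intro mono) auto
    then show "f x < a" using n0 by (rule order.strict_trans1)
  qed
qed

definition admissible_weight :: "nat \<Rightarrow> (real \<Rightarrow> real \<Rightarrow> real) \<Rightarrow> bool" where
  "admissible_weight N w \<longleftrightarrow> (\<forall>R. (\<lambda>r. w r R) \<in> borel_measurable borel) \<and>
     (\<forall>r R. 0 \<le> r \<longrightarrow> r \<le> R \<longrightarrow> (r / R)^(N - 1) \<le> w r R \<and> w r R \<le> 1)"

lemma admissible_weight_one: "admissible_weight N (\<lambda>r R. 1)"
proof -
  have "(r / R)^(N - 1) \<le> 1" if "0 \<le> r" "r \<le> R" for r R :: real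
    using that by (cases "R = 0") (auto intro!: power_le_one)
  then show ?thesis unfolding admissible_weight_def by simp
qed

lemma admissible_weight_power: "admissible_weight N (\<lambda>r R. (r / R)^(N - 1))"
proof -
  have "(r / R)^(N - 1) \<le> 1" if "0 \<le> r" "r \<le> R" for r R :: real
    using that by (cases "R = 0") (auto intro!: power_le_one)
  then show ?thesis unfolding admissible_weight_def by simp
qed

definition dbl_lower :: "nat \<Rightarrow> (real \<Rightarrow> real) \<Rightarrow> real \<Rightarrow> ennreal" where
  "dbl_lower N J R = (\<integral>\<^sup>+ z. ennreal (J (enorm N z) * exit_lower N R (max 0 (- z 0))) \<partial>RN N)"

definition dbl_upper :: "nat \<Rightarrow> (real \<Rightarrow> real) \<Rightarrow> real \<Rightarrow> ennreal" where
  "dbl_upper N J R = (\<integral>\<^sup>+ z. ennreal (J (enorm N z) * exit_upper R (z 0) (tail_sumsq N z)) \<partial>RN N)"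

lemma J_enorm_nonneg: "\<forall>r\<ge>0. J r \<ge> 0 \<Longrightarrow> J (enorm N z) \<ge> 0"
  using enorm_nonneg[of N z] by auto

lemma dbl_between_bounds:
  assumes N: "2 \<le> N" and Jm: "Jext J \<in> borel_measurable borel" and Jnn: "\<forall>r\<ge>0. J r \<ge> 0"
    and w: "admissible_weight N w" and R: "R > 0"
  shows "dbl_lower N J R \<le> dbl N J w R" "dbl N J w R \<le> dbl_upper N J R"
proof -
  have "dbl N J w R = (\<integral>\<^sup>+ z. ennreal (J (enorm N z)) * exit_weight w R (z 0) (tail_sumsq N z) \<partial>RN N)"
    using w N by (intro dbl_eq_nn_integral_exit_weight[OF _ Jm R]) (auto simp: admissible_weight_def)
  moreover have "ennreal (J (enorm N z) * exit_lower N R (max 0 (- z 0)))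
      \<le> ennreal (J (enorm N z)) * exit_weight w R (z 0) (tail_sumsq N z)" for z
    using exit_weight_ge_exit_lower[OF N R tail_sumsq_nonneg, of w "z 0"] w
      J_enorm_nonneg[OF Jnn] exit_lower_nonneg[of "max 0 (- z 0)" N R]
    by (auto simp: admissible_weight_def ennreal_mult intro: mult_left_mono)
  moreover have "ennreal (J (enorm N z)) * exit_weight w R (z 0) (tail_sumsq N z)
      \<le> ennreal (J (enorm N z) * exit_upper R (z 0) (tail_sumsq N z))" for z
    using exit_weight_le_exit_upper[OF R tail_sumsq_nonneg, of w "z 0"] w
      J_enorm_nonneg[OF Jnn] exit_upper_nonneg[OF tail_sumsq_nonneg]
    by (auto simp: admissible_weight_def ennreal_mult intro: mult_left_mono)
  ultimately show "dbl_lower N J R \<le> dbl N J w R" "dbl N J w R \<le> dbl_upper N J R"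
    unfolding dbl_lower_def dbl_upper_def by (auto intro: nn_integral_mono)
qed

lemma dbl_lower_tendsto:
  assumes N: "0 < N" and [measurable]: "Jext J \<in> borel_measurable borel" and Jnn: "\<forall>r\<ge>0. J r \<ge> 0"
  shows "(dbl_lower N J \<longlongrightarrow> half_space_moment N J) at_top"
proof (rule tendsto_at_top_of_mono_sequence)
  have [measurable]: "(\<lambda>x. x 0) \<in> borel_measurable (RN N)"
    using N by (auto intro: measurable_component_singleton)
  define f where "f n z = ennreal (J (enorm N z) * exit_lower N (real (Suc n)) (max 0 (- z 0)))" for n z
  have fm: "f n \<in> borel_measurable (RN N)" for n
    unfolding f_def exit_lower_def Jext_enorm[of J N, symmetric] by measurable
  have mono: "f m z \<le> f n z" if "m \<le> n" for m n z
    unfolding f_def using J_enorm_nonneg[OF Jnn] that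
    by (intro ennreal_leI mult_left_mono exit_lower_mono) auto
  then have inc: "incseq f"
    by (intro monoI le_funI) auto
  have "(SUP n. f n z) = ennreal (J (enorm N z)) * ennreal (max 0 (- z 0))" for z
  proof (rule LIMSEQ_unique[OF LIMSEQ_SUP])
    show "incseq (\<lambda>n. f n z)" using mono by (auto intro: monoI)
    have "(\<lambda>n. f n z) \<longlonglongrightarrow> ennreal (J (enorm N z) * max 0 (- z 0))"
      unfolding f_def by (intro tendsto_ennrealI tendsto_mult_left exit_lower_tendsto)
    then show "(\<lambda>n. f n z) \<longlonglongrightarrow> ennreal (J (enorm N z)) * ennreal (max 0 (- z 0))"
      using J_enorm_nonneg[OF Jnn] by (simp add: ennreal_mult)
  qed
  then have "(SUP n. integral\<^sup>N (RN N) (f n)) = half_space_moment N J"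
    unfolding half_space_moment_def nn_integral_monotone_convergence_SUP[OF inc fm, symmetric] by simp
  moreover have "(\<lambda>n. integral\<^sup>N (RN N) (f n)) \<longlonglongrightarrow> (SUP n. integral\<^sup>N (RN N) (f n))"
    using mono by (intro LIMSEQ_SUP monoI nn_integral_mono) auto
  ultimately show "(\<lambda>n. dbl_lower N J (real (Suc n))) \<longlonglongrightarrow> half_space_moment N J"
    unfolding dbl_lower_def f_def by simp
next
  fix x y :: real
  assume "0 < x" "x \<le> y"
  then show "dbl_lower N J x \<le> dbl_lower N J y"
    unfolding dbl_lower_def using J_enorm_nonneg[OF Jnn]
    by (intro nn_integral_mono ennreal_leI mult_left_mono exit_lower_mono) auto
qed

text \<open>Monotone convergence from above needs an integrable majorant: \<^const>\<open>exit_upper\<close>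
  is bounded by the norm.\<close>

lemma dbl_upper_tendsto:
  assumes N: "0 < N" and [measurable]: "Jext J \<in> borel_measurable borel" and Jnn: "\<forall>r\<ge>0. J r \<ge> 0"
    and fin: "norm_moment N J < \<infinity>"
  shows "(dbl_upper N J \<longlongrightarrow> half_space_moment N J) at_top"
proof (rule tendsto_at_top_of_antimono_sequence)
  have [measurable]: "(\<lambda>x. x 0) \<in> borel_measurable (RN N)"
    using N by (auto intro: measurable_component_singleton)
  define f where "f n z = ennreal (J (enorm N z) * exit_upper (real (Suc n)) (z 0) (tail_sumsq N z))" for n z
  have fm: "f n \<in> borel_measurable (RN N)" for n
    unfolding f_def exit_upper_def Jext_enorm[of J N, symmetric] by measurable
  have mono: "f n z \<le> f m z" if "m \<le> n" for m n z
    unfolding f_def using J_enorm_nonneg[OF Jnn] that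
    by (intro ennreal_leI mult_left_mono exit_upper_antimono tail_sumsq_nonneg) auto
  then have dec: "decseq f"
    by (intro antimonoI le_funI) auto
  have "integral\<^sup>N (RN N) (f n) \<le> norm_moment N J" for n
    unfolding f_def norm_moment_def
  proof (rule nn_integral_mono)
    fix z
    have "exit_upper (real (Suc n)) (z 0) (tail_sumsq N z) \<le> enorm N z"
      using exit_upper_le[OF tail_sumsq_nonneg] enorm_eq_sqrt_head_tail[OF N] by simp
    then show "ennreal (J (enorm N z) * exit_upper (real (Suc n)) (z 0) (tail_sumsq N z))
        \<le> ennreal (J (enorm N z)) * ennreal (enorm N z)"
      using J_enorm_nonneg[OF Jnn]
      by (simp flip: ennreal_mult add: enorm_nonneg ennreal_leI mult_left_mono)
  qed
  then have fin_n: "integral\<^sup>N (RN N) (f n) < \<infinity>" for n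
    using fin by (rule le_less_trans)
  have "(INF n. f n z) = ennreal (J (enorm N z)) * ennreal (max 0 (- z 0))" for z
  proof (rule LIMSEQ_unique[OF LIMSEQ_INF])
    show "decseq (\<lambda>n. f n z)" using mono by (auto intro: antimonoI)
    have "(\<lambda>n. f n z) \<longlonglongrightarrow> ennreal (J (enorm N z) * max 0 (- z 0))"
      unfolding f_def by (intro tendsto_ennrealI tendsto_mult_left exit_upper_tendsto tail_sumsq_nonneg)
    then show "(\<lambda>n. f n z) \<longlonglongrightarrow> ennreal (J (enorm N z)) * ennreal (max 0 (- z 0))"
      using J_enorm_nonneg[OF Jnn] by (simp add: ennreal_mult)
  qed
  then have "(INF n. integral\<^sup>N (RN N) (f n)) = half_space_moment N J"
    unfolding half_space_moment_def nn_integral_monotone_convergence_INF_decseq[OF dec fm fin_n, symmetric]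
    by simp
  moreover have "(\<lambda>n. integral\<^sup>N (RN N) (f n)) \<longlonglongrightarrow> (INF n. integral\<^sup>N (RN N) (f n))"
    using mono by (intro LIMSEQ_INF antimonoI nn_integral_mono) auto
  ultimately show "(\<lambda>n. dbl_upper N J (real (Suc n))) \<longlonglongrightarrow> half_space_moment N J"
    unfolding dbl_upper_def f_def by simp
next
  fix x y :: real
  assume "0 < x" "x \<le> y"
  then show "dbl_upper N J y \<le> dbl_upper N J x"
    unfolding dbl_upper_def using J_enorm_nonneg[OF Jnn]
    by (intro nn_integral_mono ennreal_leI mult_left_mono exit_upper_antimono tail_sumsq_nonneg) auto
qed

lemma dbl_tendsto_half_space_moment:
  assumes N: "2 \<le> N" and Jm: "Jext J \<in> borel_measurable borel" and Jnn: "\<forall>r\<ge>0. J r \<ge> 0"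
    and w: "admissible_weight N w" and fin: "half_space_moment N J < \<infinity>"
  shows "(dbl N J w \<longlongrightarrow> half_space_moment N J) at_top"
proof (rule tendsto_sandwich)
  have N0: "0 < N" using N by simp
  show "eventually (\<lambda>R. dbl_lower N J R \<le> dbl N J w R) at_top"
    "eventually (\<lambda>R. dbl N J w R \<le> dbl_upper N J R) at_top"
    using eventually_gt_at_top[of "0::real"]
    by (eventually_elim, simp add: dbl_between_bounds[OF N Jm Jnn w])+
  show "(dbl_lower N J \<longlongrightarrow> half_space_moment N J) at_top"
    by (rule dbl_lower_tendsto[OF N0 Jm Jnn])
  have "norm_moment N J < \<infinity>"
    using fin norm_moment_finite[OF N0 Jm Jnn] half_space_moment_finite_iff[OF N0 Jm Jnn] by blast
  then show "(dbl_upper N J \<longlongrightarrow> half_space_moment N J) at_top"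
    by (rule dbl_upper_tendsto[OF N0 Jm Jnn])
qed

lemma Limsup_dbl_finite_iff:
  assumes N: "2 \<le> N" and Jm: "Jext J \<in> borel_measurable borel" and Jnn: "\<forall>r\<ge>0. J r \<ge> 0"
    and w: "admissible_weight N w"
  shows "Limsup at_top (dbl N J w) < \<infinity> \<longleftrightarrow> half_space_moment N J < \<infinity>"
proof
  assume L: "Limsup at_top (dbl N J w) < \<infinity>"
  have ev: "\<forall>\<^sub>F R in at_top. dbl_lower N J R \<le> dbl N J w R"
    using eventually_gt_at_top[of "0::real"]
    by eventually_elim (simp add: dbl_between_bounds[OF N Jm Jnn w])
  have "half_space_moment N J = Liminf at_top (dbl_lower N J)"
    using N by (intro lim_imp_Liminf[symmetric] dbl_lower_tendsto Jm Jnn) auto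
  also have "\<dots> \<le> Liminf at_top (dbl N J w)"
    by (rule Liminf_mono[OF ev])
  also have "\<dots> \<le> Limsup at_top (dbl N J w)"
    by (rule Liminf_le_Limsup) simp
  finally show "half_space_moment N J < \<infinity>" using L by (rule le_less_trans)
next
  assume "half_space_moment N J < \<infinity>"
  moreover from this have "Limsup at_top (dbl N J w) = half_space_moment N J"
    by (intro lim_imp_Limsup dbl_tendsto_half_space_moment assms) auto
  ultimately show "Limsup at_top (dbl N J w) < \<infinity>" by simp
qed

theorem theorem2p6:
  fixes N :: nat and J :: "real \<Rightarrow> real"
  assumes N2: "N \<ge> 2"
    and Jcont: "continuous_on {0..} J"
    and Jbdd: "\<exists>M. \<forall>r\<ge>0. \<bar>J r\<bar> \<le> M"
    and Jnonneg: "\<forall>r\<ge>0. J r \<ge> 0"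
    and J0: "J 0 > 0"
    and Jint: "(\<integral>\<^sup>+ x. ennreal (J (enorm N x)) \<partial>Rn N) = 1"
  shows
    "((\<integral>\<^sup>+ r. ennreal (J r * r ^ N) * indicator {0..} r \<partial>lborel) < \<infinity>
        \<longleftrightarrow> (\<integral>\<^sup>+ l. Jstar N J l * ennreal l * indicator {0..} l \<partial>lborel) < \<infinity>)
     \<and> ((\<integral>\<^sup>+ l. Jstar N J l * ennreal l * indicator {0..} l \<partial>lborel) < \<infinity>
        \<longleftrightarrow> Limsup at_top (dbl N J (\<lambda>r R. 1)) < \<infinity>)
     \<and> (Limsup at_top (dbl N J (\<lambda>r R. 1)) < \<infinity>
        \<longleftrightarrow> Limsup at_top (dbl N J (\<lambda>r R. (r / R) ^ (N - 1))) < \<infinity>)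
     \<and> ((\<integral>\<^sup>+ r. ennreal (J r * r ^ N) * indicator {0..} r \<partial>lborel) < \<infinity> \<longrightarrow>
          (dbl N J (\<lambda>r R. 1) \<longlongrightarrow> (\<integral>\<^sup>+ l. Jstar N J l * ennreal l * indicator {0..} l \<partial>lborel)) at_top
        \<and> (dbl N J (\<lambda>r R. (r / R) ^ (N - 1)) \<longlongrightarrow> (\<integral>\<^sup>+ l. Jstar N J l * ennreal l * indicator {0..} l \<partial>lborel)) at_top)"
proof -
  have N0: "0 < N" using N2 by simp
  note Jm = Jext_measurable[OF Jcont]
  note weights = admissible_weight_one[of N] admissible_weight_power[of N]
  show ?thesis
    unfolding Jstar_moment_eq_half_space_moment[OF N0 Jm] radial_moment_def[symmetric]
    using half_space_moment_finite_iff[OF N0 Jm Jnonneg]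
      Limsup_dbl_finite_iff[OF N2 Jm Jnonneg weights(1)]
      Limsup_dbl_finite_iff[OF N2 Jm Jnonneg weights(2)]
      dbl_tendsto_half_space_moment[OF N2 Jm Jnonneg weights(1)]
      dbl_tendsto_half_space_moment[OF N2 Jm Jnonneg weights(2)]
    by blast
qed

end
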